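(* (1) Every $\alpha_{2^-}$ topological space is locally Ramsey. (2) Every $\alpha_{2^-}$ topological group is Ramsey.
   Context: A countably infinite set $A$ in a space $X$ converges to $x\in X$ if $x\notin A$ and every neighborhood of $x$ contains all but finitely many elements of $A$. $\lim_m x_{nm}=x$ means $x_{nm}\neq x$ for all $m$ and every neighborhood of $x$ contains $x_{nm}$ for all but finitely many $m$. A space $X$ is $\alpha_{2^-}$ if for each $x\in X$, whenever $\lim_m x_{nm}=x$ for all $n\in\mathbb N$, there are $m_1<m_2<\dots$ such that $\bigcup_n\{x_{1m_n},\dots,x_{nm_n}\}$ converges to $x$. A space $X$ is locally Ramsey if for each $x\in X$, whenever $\lim_m x_{nm}=x$ for all $n$, there is an infinite $I\subseteq\mathbb N$ such that $\{x_{nm}: n,m\in I,\ n<m\}$ converges to $x$. A space $X$ is Ramsey (Nogura–Shakhmatov) if whenever $\lim_n\lim_m x_{nm}=x$ (i.e., $\lim_m x_{nm}=x_n$ for each $n$ and $\lim_n x_n=x$), there is an infinite $I\subseteq\mathbb N$ such that for each neighborhood $U$ of $x$ there is $k$ with $\{x_{nm}: k<n<m,\ n,m\in I\}\subseteq U$. *)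

theory Defs
  imports "HOL-Analysis.Analysis"
begin

text \<open>Sequence convergence in the paper's sense: all terms differ from the limit.\<close>
definition seq_conv :: "(nat \<Rightarrow> 'a::topological_space) \<Rightarrow> 'a \<Rightarrow> bool" where
  "seq_conv s x \<longleftrightarrow> (\<forall>m. s m \<noteq> x) \<and> (s \<longlonglongrightarrow> x)"

definition set_conv :: "'a::topological_space set \<Rightarrow> 'a \<Rightarrow> bool" where
  "set_conv A x \<longleftrightarrow> countable A \<and> infinite A \<and> x \<notin> A \<and>
     (\<forall>U. open U \<and> x \<in> U \<longrightarrow> finite (A - U))"

text \<open>alpha_{2-}; indices are 0-based: the union over n of x_{i,m_n} for i \<le> n.\<close>
definition alpha2minus :: "'a::topological_space itself \<Rightarrow> bool" where
  "alpha2minus _ \<longleftrightarrow> (\<forall>(x::'a) (xs :: nat \<Rightarrow> nat \<Rightarrow> 'a).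
     (\<forall>n. seq_conv (xs n) x) \<longrightarrow>
     (\<exists>ms. strict_mono ms \<and> set_conv (\<Union>n. {xs i (ms n) | i. i \<le> n}) x))"

definition locally_ramsey :: "'a::topological_space itself \<Rightarrow> bool" where
  "locally_ramsey _ \<longleftrightarrow> (\<forall>(x::'a) (xs :: nat \<Rightarrow> nat \<Rightarrow> 'a).
     (\<forall>n. seq_conv (xs n) x) \<longrightarrow>
     (\<exists>I. infinite I \<and> set_conv {xs n m | n m. n \<in> I \<and> m \<in> I \<and> n < m} x))"

text \<open>Ramsey in the sense of Nogura--Shakhmatov.\<close>
definition ramsey_space :: "'a::topological_space itself \<Rightarrow> bool" where
  "ramsey_space _ \<longleftrightarrow> (\<forall>(x::'a) (xn :: nat \<Rightarrow> 'a) (xs :: nat \<Rightarrow> nat \<Rightarrow> 'a).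
     (\<forall>n. seq_conv (xs n) (xn n)) \<and> seq_conv xn x \<longrightarrow>
     (\<exists>I. infinite I \<and> (\<forall>U. open U \<and> x \<in> U \<longrightarrow>
        (\<exists>k. {xs n m | n m. k < n \<and> n < m \<and> n \<in> I \<and> m \<in> I} \<subseteq> U))))"

end

theory Submission
  imports Defs
begin

(* By alpha_{2-} there is a strictly increasing ms such that
   A = (UN n. {xs a (ms n) | a <= n}) converges to x. Points of an alpha_{2-} space can be separated
   from x by open sets (otherwise a constant sequence would converge to x, and alpha_{2-} would
   produce a finite set), so every value other than x occurs only finitely often in each xs a.
   Hence g 0 < g 1 < ... can be chosen greedily, g (j+1) = ms k with k > g j so large that the
   entries xs a (ms k), a <= g j, avoid the finitely many values xs a' b' with a', b' <= g j. Then
   xs (g i) (g j) lies in A for i < j, and entries in different columns j are distinct. Since A - U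
   is finite for every neighbourhood U of x, only finitely many columns leave U, and I = range g
   works. In a topological group, apply this to the recentred sequences x + (- xn n + xs n m),
   which converge to x, and use continuity of (a, b) |-> a + (- x + b) at (x, x): it maps
   (xn n, x + (- xn n + xs n m)) to xs n m. *)

lemma alpha2minus_separates_points:
  assumes "alpha2minus TYPE('a::topological_space)" and "(y::'a) \<noteq> x"
  obtains U where "open U" "x \<in> U" "y \<notin> U"
proof (rule ccontr)
  assume "\<not> thesis"
  with that have "\<forall>U. open U \<and> x \<in> U \<longrightarrow> y \<in> U" by blast
  then have "(\<lambda>m::nat. y) \<longlonglongrightarrow> x" by (intro topological_tendstoI) auto
  with \<open>y \<noteq> x\<close> have "seq_conv (\<lambda>m::nat. y) x" by (simp add: seq_conv_def)
  then obtain ms :: "nat \<Rightarrow> nat" where "set_conv (\<Union>n. {y | i. i \<le> (n::nat)}) x"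
    using assms(1)[unfolded alpha2minus_def, rule_format, of "\<lambda>n m. y" x] by blast
  moreover have "(\<Union>n. {y | i. i \<le> (n::nat)}) = {y}" by auto
  ultimately show False by (simp add: set_conv_def)
qed

lemma LIMSEQ_finite_vimage_singleton:
  assumes "s \<longlonglongrightarrow> x" "open U" "x \<in> U" "y \<notin> U"
  shows "finite (s -` {y})"
proof -
  have "eventually (\<lambda>m. s m \<in> U) sequentially" using assms by (simp add: topological_tendstoD)
  then have "finite {m. s m \<notin> U}"
    by (simp add: eventually_cofinite flip: cofinite_eq_sequentially)
  moreover have "s -` {y} \<subseteq> {m. s m \<notin> U}" using assms(4) by auto
  ultimately show ?thesis by (rule finite_subset[rotated])
qed

lemma set_conv_subset:
  assumes "set_conv A x" "B \<subseteq> A" "infinite B"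
  shows "set_conv B x"
  using assms countable_subset unfolding set_conv_def by (metis Diff_mono finite_subset order_refl subsetD)

definition distinct_columns :: "(nat \<Rightarrow> nat \<Rightarrow> 'a) \<Rightarrow> bool" where
  "distinct_columns z \<longleftrightarrow> (\<forall>i j i' j'. i < j \<longrightarrow> i' < j' \<longrightarrow> j < j' \<longrightarrow> z i j \<noteq> z i' j')"

lemma exists_diagonal_with_distinct_columns:
  fixes ys :: "nat \<Rightarrow> nat \<Rightarrow> 'a"
  assumes fibres: "\<And>a y. y \<noteq> x \<Longrightarrow> finite (ys a -` {y})"
    and avoids: "\<And>a m. ys a m \<noteq> x"
    and ms: "strict_mono ms"
  obtains g :: "nat \<Rightarrow> nat" where "strict_mono g"
    "\<And>i j. i < j \<Longrightarrow> ys (g i) (g j) \<in> (\<Union>n. {ys a (ms n) | a. a \<le> n})"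
    "distinct_columns (\<lambda>i j. ys (g i) (g j))"
proof -
  define Old where "Old c = (\<lambda>(a, b). ys a b) ` ({..c} \<times> {..c})" for c
  define Bad where "Bad c = {k. \<exists>a\<le>c. ys a (ms k) \<in> Old c}" for c
  have "finite (Bad c)" for c
  proof -
    have "finite (Old c)" "x \<notin> Old c" using avoids by (auto simp: Old_def)
    then have "finite (ys a -` Old c)" for a
      unfolding vimage_eq_UN[of "ys a" "Old c"] by (intro finite_UN_I) (auto intro: fibres)
    then have "finite (ms -` (ys a -` Old c))" for a
      using strict_mono_imp_inj_on[OF ms] by (simp add: finite_vimageI)
    moreover have "Bad c = (\<Union>a\<le>c. ms -` (ys a -` Old c))" unfolding Bad_def by blast
    ultimately show ?thesis by simp
  qed
  have "\<exists>k. c < k \<and> k \<notin> Bad c" for c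
  proof -
    have "finite (Bad c \<union> {..c})" using \<open>finite (Bad c)\<close> by simp
    then obtain k where "k \<notin> Bad c \<union> {..c}" using ex_new_if_finite[OF infinite_UNIV_nat] by blast
    then show ?thesis by (auto simp: not_le)
  qed
  then obtain K where K: "\<forall>c. c < K c \<and> K c \<notin> Bad c"
    using choice[of "\<lambda>c k. c < k \<and> k \<notin> Bad c"] by blast
  define g where "g = rec_nat (ms 0) (\<lambda>_ c. ms (K c))"
  have g_Suc: "g (Suc j) = ms (K (g j))" for j by (simp add: g_def)
  have "g j < g (Suc j)" for j
    using K seq_suble[OF ms, of "K (g j)"] g_Suc[of j] by (metis less_le_trans)
  then have g: "strict_mono g" by (simp add: strict_mono_Suc_iff)
  show thesis
  proof (rule that[OF g])
    fix i j :: nat assume "i < j"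
    then obtain j' where j: "j = Suc j'" "i \<le> j'" by (cases j) auto
    have "g i \<le> K (g j')" using K g j(2) by (metis less_imp_le order_trans strict_mono_less_eq)
    then show "ys (g i) (g j) \<in> (\<Union>n. {ys a (ms n) | a. a \<le> n})"
      unfolding j g_Suc by blast
  next
    show "distinct_columns (\<lambda>i j. ys (g i) (g j))"
      unfolding distinct_columns_def
    proof (intro allI impI)
      fix i j i' j' :: nat assume "i < j" "i' < j'" "j < j'"
      then obtain c where c: "j' = Suc c" "i' \<le> c" "j \<le> c" by (cases j') auto
      then have le_c: "g i \<le> g c" "g j \<le> g c" "g i' \<le> g c"
        using \<open>i < j\<close> g by (simp_all add: strict_mono_less_eq)
      then have "ys (g i) (g j) \<in> Old (g c)"
        unfolding Old_def by (intro image_eqI[of _ _ "(g i, g j)"]) auto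
      moreover have "ys (g i') (g j') \<notin> Old (g c)"
        using K le_c(3) unfolding Bad_def c g_Suc by blast
      ultimately show "ys (g i) (g j) \<noteq> ys (g i') (g j')" by metis
    qed
  qed
qed

lemma distinct_columns_eventually_avoid:
  assumes "distinct_columns z" and "finite F"
  obtains b where "\<And>i j. i < j \<Longrightarrow> b \<le> j \<Longrightarrow> z i j \<notin> F"
proof -
  define J where "J = {j. \<exists>i<j. z i j \<in> F}"
  have "\<forall>j\<in>J. \<exists>i. i < j \<and> z i j \<in> F" unfolding J_def by blast
  then obtain r where r: "\<forall>j\<in>J. r j < j \<and> z (r j) j \<in> F"
    using bchoice[of J "\<lambda>j i. i < j \<and> z i j \<in> F"] by blast
  have "z (r j) j \<noteq> z (r j') j'" if "j < j'" "j \<in> J" "j' \<in> J" for j j'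
    using assms(1) r that unfolding distinct_columns_def by auto
  then have "inj_on (\<lambda>j. z (r j) j) J" by (intro inj_onI) (metis linorder_neqE_nat)
  then have "finite J" by (rule inj_on_finite) (use r \<open>finite F\<close> in auto)
  then obtain b where "J \<subseteq> {..<b}" using finite_nat_bounded by blast
  then show thesis by (intro that[of b]) (auto simp: J_def)
qed

lemma alpha2minus_diagonal:
  fixes xs :: "nat \<Rightarrow> nat \<Rightarrow> 'a::topological_space"
  assumes "alpha2minus TYPE('a)" and "\<And>n. seq_conv (xs n) x"
  obtains A and g :: "nat \<Rightarrow> nat"
  where "set_conv A x" "strict_mono g" "\<And>i j. i < j \<Longrightarrow> xs (g i) (g j) \<in> A"
    "distinct_columns (\<lambda>i j. xs (g i) (g j))"
proof -
  from assms obtain ms where ms: "strict_mono ms"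
    and A: "set_conv (\<Union>n. {xs a (ms n) | a. a \<le> n}) x"
    unfolding alpha2minus_def by blast
  have fibres: "finite (xs a -` {y})" if "y \<noteq> x" for a y
  proof -
    obtain U where "open U" "x \<in> U" "y \<notin> U" using alpha2minus_separates_points assms(1) \<open>y \<noteq> x\<close> .
    moreover have "xs a \<longlonglongrightarrow> x" using assms(2) by (simp add: seq_conv_def)
    ultimately show ?thesis by (intro LIMSEQ_finite_vimage_singleton)
  qed
  have avoids: "xs a m \<noteq> x" for a m using assms(2) by (simp add: seq_conv_def)
  show thesis
  proof (rule exists_diagonal_with_distinct_columns[where ys = xs, OF fibres avoids ms])
    fix g :: "nat \<Rightarrow> nat" assume "strict_mono g"
      "\<And>i j. i < j \<Longrightarrow> xs (g i) (g j) \<in> (\<Union>n. {xs a (ms n) | a. a \<le> n})"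
      "distinct_columns (\<lambda>i j. xs (g i) (g j))"
    with A show thesis by (rule that)
  qed
qed

lemma strict_mono_pairs_range:
  fixes g :: "'a::linorder \<Rightarrow> 'b::linorder"
  assumes "strict_mono g"
  shows "{f n m | n m. n \<in> range g \<and> m \<in> range g \<and> n < m} = {f (g i) (g j) | i j. i < j}"
  using strict_mono_less[OF assms] by blast

lemma alpha2minus_imp_locally_ramsey:
  assumes "alpha2minus TYPE('a::topological_space)"
  shows "locally_ramsey TYPE('a)"
  unfolding locally_ramsey_def
proof (intro allI impI)
  fix x :: 'a and xs :: "nat \<Rightarrow> nat \<Rightarrow> 'a" assume conv: "\<forall>n. seq_conv (xs n) x"
  show "\<exists>I. infinite I \<and> set_conv {xs n m | n m. n \<in> I \<and> m \<in> I \<and> n < m} x"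
  proof (rule alpha2minus_diagonal[OF assms conv[rule_format]])
    fix A and g :: "nat \<Rightarrow> nat" assume A: "set_conv A x" and g: "strict_mono g"
      and in_A: "\<And>i j. i < j \<Longrightarrow> xs (g i) (g j) \<in> A"
      and distinct: "distinct_columns (\<lambda>i j. xs (g i) (g j))"
    define B where "B = {xs (g i) (g j) | i j. i < j}"
    have "B \<subseteq> A" unfolding B_def using in_A by auto
    moreover have "infinite B"
    proof
      assume "finite B"
      show False
      proof (rule distinct_columns_eventually_avoid[OF distinct \<open>finite B\<close>])
        fix b assume "\<And>i j. i < j \<Longrightarrow> b \<le> j \<Longrightarrow> xs (g i) (g j) \<notin> B"
        then have "xs (g 0) (g (Suc b)) \<notin> B" by simp
        moreover have "xs (g 0) (g (Suc b)) \<in> B" unfolding B_def by blast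
        ultimately show False by contradiction
      qed
    qed
    ultimately have "set_conv B x" by (rule set_conv_subset[OF A])
    moreover have "B = {xs n m | n m. n \<in> range g \<and> m \<in> range g \<and> n < m}"
      unfolding B_def by (rule strict_mono_pairs_range[OF g, symmetric])
    moreover have "infinite (range g)" using strict_mono_imp_inj_on[OF g] by (rule range_inj_infinite)
    ultimately show "\<exists>I. infinite I \<and> set_conv {xs n m | n m. n \<in> I \<and> m \<in> I \<and> n < m} x"
      by (intro exI[of _ "range g"]) simp
  qed
qed

lemma seq_conv_recentre:
  fixes s :: "nat \<Rightarrow> 'a::topological_group_add"
  assumes "seq_conv s y"
  shows "seq_conv (\<lambda>m. x + (- y + s m)) x"
proof -
  have "(\<lambda>m. x + (- y + s m)) \<longlonglongrightarrow> x + (- y + y)"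
    using assms unfolding seq_conv_def by (intro tendsto_intros) simp
  moreover have "x + (- y + s m) \<noteq> x" for m
    using assms unfolding seq_conv_def by (metis add_cancel_left_right add_minus_cancel add.right_neutral)
  ultimately show ?thesis by (simp add: seq_conv_def)
qed

lemma recentred_sum_nhds:
  fixes x :: "'a::topological_group_add"
  assumes "open U" "x \<in> U"
  obtains V W where "open V" "x \<in> V" "open W" "x \<in> W" "\<forall>a\<in>V. \<forall>b\<in>W. a + (- x + b) \<in> U"
proof -
  define f where "f p = fst p + (- x + snd p)" for p :: "'a \<times> 'a"
  have "open (f -` U)" unfolding f_def using \<open>open U\<close> by (intro open_vimage continuous_intros)
  moreover have "(x, x) \<in> f -` U" using \<open>x \<in> U\<close> by (simp add: f_def)
  ultimately obtain V W where "open V" "open W" "(x, x) \<in> V \<times> W" "V \<times> W \<subseteq> f -` U"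
    by (rule open_prod_elim)
  then show thesis by (intro that[of V W]) (auto simp: f_def)
qed

lemma recentred_pairs_eventually_in_nhds:
  fixes x :: "'a::topological_group_add"
  assumes xn: "xn \<longlonglongrightarrow> x" and A: "set_conv A x" and g: "strict_mono g"
    and in_A: "\<And>i j. i < j \<Longrightarrow> x + (- xn (g i) + xs (g i) (g j)) \<in> A"
    and distinct: "distinct_columns (\<lambda>i j. x + (- xn (g i) + xs (g i) (g j)))"
    and U: "open U" "x \<in> U"
  shows "\<exists>k. {xs n m | n m. k < n \<and> n < m \<and> n \<in> range g \<and> m \<in> range g} \<subseteq> U"
proof -
  obtain V W where V: "open V" "x \<in> V" and W: "open W" "x \<in> W"
    and VW: "\<forall>a\<in>V. \<forall>b\<in>W. a + (- x + b) \<in> U"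
    using recentred_sum_nhds[OF U] by blast
  have "eventually (\<lambda>n. xn n \<in> V) sequentially" using xn V by (rule topological_tendstoD)
  then obtain N where N: "\<forall>n\<ge>N. xn n \<in> V" by (auto simp: eventually_sequentially)
  have "finite (A - W)" using A W by (simp add: set_conv_def)
  show ?thesis
  proof (rule distinct_columns_eventually_avoid[OF distinct \<open>finite (A - W)\<close>])
    fix b assume b: "\<And>i j. i < j \<Longrightarrow> b \<le> j \<Longrightarrow> x + (- xn (g i) + xs (g i) (g j)) \<notin> A - W"
    show ?thesis
    proof (intro exI[of _ "max N (g b)"] subsetI)
      fix z assume "z \<in> {xs n m | n m. max N (g b) < n \<and> n < m \<and> n \<in> range g \<and> m \<in> range g}"
      then obtain i j where z: "z = xs (g i) (g j)" "max N (g b) < g i" "g i < g j" by blast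
      then have "b < i" "i < j" using strict_mono_less[OF g] by auto
      then have "x + (- xn (g i) + xs (g i) (g j)) \<in> W"
        using b in_A by (meson DiffI less_imp_le order.strict_trans)
      moreover have "xn (g i) \<in> V" using N z by simp
      ultimately have "xn (g i) + (- x + (x + (- xn (g i) + xs (g i) (g j)))) \<in> U" using VW by blast
      then show "z \<in> U" using z by simp
    qed
  qed
qed

lemma alpha2minus_imp_ramsey_space:
  assumes "alpha2minus TYPE('a::topological_group_add)"
  shows "ramsey_space TYPE('a)"
  unfolding ramsey_space_def
proof (intro allI impI)
  fix x :: 'a and xn :: "nat \<Rightarrow> 'a" and xs :: "nat \<Rightarrow> nat \<Rightarrow> 'a"
  assume "(\<forall>n. seq_conv (xs n) (xn n)) \<and> seq_conv xn x"
  then have rows: "\<And>n. seq_conv (xs n) (xn n)" and xn: "xn \<longlonglongrightarrow> x"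
    by (auto simp: seq_conv_def)
  have "seq_conv (\<lambda>m. x + (- xn n + xs n m)) x" for n by (rule seq_conv_recentre[OF rows])
  then show "\<exists>I. infinite I \<and> (\<forall>U. open U \<and> x \<in> U \<longrightarrow>
      (\<exists>k. {xs n m | n m. k < n \<and> n < m \<and> n \<in> I \<and> m \<in> I} \<subseteq> U))"
  proof (rule alpha2minus_diagonal[OF assms])
    fix A and g :: "nat \<Rightarrow> nat" assume A: "set_conv A x" and g: "strict_mono g"
      and in_A: "\<And>i j. i < j \<Longrightarrow> x + (- xn (g i) + xs (g i) (g j)) \<in> A"
      and distinct: "distinct_columns (\<lambda>i j. x + (- xn (g i) + xs (g i) (g j)))"
    have "infinite (range g)" using strict_mono_imp_inj_on[OF g] by (rule range_inj_infinite)
    moreover note recentred_pairs_eventually_in_nhds[OF xn A g in_A distinct]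
    ultimately show "\<exists>I. infinite I \<and> (\<forall>U. open U \<and> x \<in> U \<longrightarrow>
        (\<exists>k. {xs n m | n m. k < n \<and> n < m \<and> n \<in> I \<and> m \<in> I} \<subseteq> U))" by blast
  qed
qed

theorem proposition2p5:
  shows "(alpha2minus TYPE('a::topological_space) \<longrightarrow> locally_ramsey TYPE('a))
       \<and> (alpha2minus TYPE('b::topological_group_add) \<longrightarrow> ramsey_space TYPE('b))"
  using alpha2minus_imp_locally_ramsey alpha2minus_imp_ramsey_space by blast

end
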